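(* Suppose there exist a measurable set $\widetilde X\subset X$ with $\mu(\widetilde X)>0$ and a measurable function $A:\widetilde X\to(0,+\infty)$ such that for every $\tau\in\widetilde X$: (i) $g(u,\tau)=0$ if and only if $u=0$; (ii) $K(s,\tau)>0$ for all $s\in(-A(\tau),A(\tau))$. If $\phi$ is a solution of (E) with $\phi(0)=0$, then $\phi(t)=0$ for all $t\in\mathbb{R}$.
   Context: Let $(X,\mu)$ be a finite measure space. Let $K:\mathbb{R}\times X\to[0,\infty)$ be measurable and integrable on $\mathbb{R}\times X$, with $\int_{\mathbb{R}}K(s,\tau)\,ds>0$ for every $\tau$. Let $g:[0,\infty)\times X\to[0,\infty)$ be measurable, with $g(0,\tau)=0$, $g(\cdot,\tau)$ continuous for each $\tau$, and the derivative $g'(0,\tau)$ at $0$ existing and positive. Equation (E): $\phi(t)=\int_X d\mu(\tau)\int_{\mathbb{R}}K(s,\tau)\,g(\phi(t-s),\tau)\,ds$, $t\in\mathbb{R}$; a solution is a continuous function $\phi:\mathbb{R}\to[0,\infty)$ satisfying (E) for all $t$. *)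

theory Defs
  imports "HOL-Analysis.Analysis"
begin

end

theory Submission
  imports Defs
begin

text \<open>The zero set of \<phi> is closed by continuity; it is also open. Indeed, if \<phi> t = 0 then
  the right-hand side of (E) vanishes at t, so for some \<tau> \<in> Xt the inner integrand
  K s \<tau> * g (\<phi> (t - s)) \<tau> vanishes for almost every s. On (-A \<tau>, A \<tau>) the kernel is
  positive and g vanishes only at 0, hence \<phi> (t - s) = 0 for almost every, and by continuity
  every, s in that interval. Connectedness of \<real> and \<phi> 0 = 0 finish the proof.\<close>

lemma continuous_AE_eq_on_open_imp_eq:
  fixes f :: "'a::euclidean_space \<Rightarrow> 'b::t1_space"
  assumes "continuous_on UNIV f" "open S"
    and "AE x in lborel. x \<in> S \<longrightarrow> f x = c" "x \<in> S"
  shows "f x = c"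
proof -
  have "closed {x. f x = c}"
    using continuous_closed_preimage_constant[OF assms(1) closed_UNIV] by simp
  moreover have "AE x \<in> S in lebesgue. x \<in> {x. f x = c}"
    using AE_completion[OF assms(3)] by simp
  ultimately show ?thesis
    using mem_closed_if_AE_lebesgue_open[OF assms(2)] assms(4) by blast
qed

lemma nn_integral_iterated_zero_obtains:
  fixes f :: "'a \<Rightarrow> 'b \<Rightarrow> ennreal"
  assumes "sigma_finite_measure N"
    and "(\<lambda>(s, \<tau>). f s \<tau>) \<in> borel_measurable (N \<Otimes>\<^sub>M M)"
    and "(\<integral>\<^sup>+ \<tau>. (\<integral>\<^sup>+ s. f s \<tau> \<partial>N) \<partial>M) = 0"
    and "X \<in> sets M" "emeasure M X \<noteq> 0"
  obtains \<tau> where "\<tau> \<in> X" "AE s in N. f s \<tau> = 0"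
proof -
  interpret N: sigma_finite_measure N by fact
  have swap: "(\<lambda>(\<tau>, s). f s \<tau>) \<in> borel_measurable (M \<Otimes>\<^sub>M N)"
    using measurable_pair_swap_iff[of "\<lambda>(s, \<tau>). f s \<tau>" N M] assms(2) by simp
  have inner_meas: "(\<lambda>\<tau>. \<integral>\<^sup>+ s. f s \<tau> \<partial>N) \<in> borel_measurable M"
    using N.borel_measurable_nn_integral[OF swap] .
  have AE_zero: "AE \<tau> in M. (\<integral>\<^sup>+ s. f s \<tau> \<partial>N) = 0"
    using assms(3) nn_integral_0_iff_AE[OF inner_meas] by simp
  have "\<exists>\<tau>\<in>X. (\<integral>\<^sup>+ s. f s \<tau> \<partial>N) = 0"
  proof (rule ccontr)
    assume no_zero: "\<not> ?thesis"
    from AE_zero have "AE \<tau> in M. \<tau> \<notin> X"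
      by eventually_elim (use no_zero in auto)
    then have "emeasure M X = 0"
      using AE_iff_measurable[OF assms(4), of "\<lambda>\<tau>. \<tau> \<notin> X"] sets.sets_into_space[OF assms(4)]
      by auto
    with assms(5) show False ..
  qed
  then obtain \<tau> where \<tau>: "\<tau> \<in> X" "(\<integral>\<^sup>+ s. f s \<tau> \<partial>N) = 0" ..
  then have "\<tau> \<in> space M"
    using sets.sets_into_space[OF assms(4)] by blast
  have "(\<lambda>s. f s \<tau>) \<in> borel_measurable N"
    using measurable_Pair1[OF assms(2) \<open>\<tau> \<in> space M\<close>] by simp
  then show ?thesis
    using that \<tau> nn_integral_0_iff_AE by blast
qed

lemma borel_measurable_kernel_integrand:
  fixes K g :: "real \<Rightarrow> 'x \<Rightarrow> real" and \<phi> :: "real \<Rightarrow> real"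
  assumes "(\<lambda>(s, \<tau>). K s \<tau>) \<in> borel_measurable (lborel \<Otimes>\<^sub>M M)"
    and "(\<lambda>(u, \<tau>). g u \<tau>) \<in> borel_measurable (restrict_space (lborel \<Otimes>\<^sub>M M) ({0..} \<times> space M))"
    and "\<phi> \<in> borel_measurable borel" "\<And>t. \<phi> t \<ge> 0"
  shows "(\<lambda>(s, \<tau>). K s \<tau> * g (\<phi> (t - s)) \<tau>) \<in> borel_measurable (lborel \<Otimes>\<^sub>M M)"
proof -
  have "(\<lambda>(s, \<tau>). (\<phi> (t - s), \<tau>))
      \<in> measurable (lborel \<Otimes>\<^sub>M M) (restrict_space (lborel \<Otimes>\<^sub>M M) ({0..} \<times> space M))"
  proof (rule measurable_restrict_space2)
    show "(\<lambda>(s, \<tau>). (\<phi> (t - s), \<tau>)) \<in> space (lborel \<Otimes>\<^sub>M M) \<rightarrow> {0..} \<times> space M"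
      using assms(4) by (auto simp: space_pair_measure)
    have "(\<lambda>s. \<phi> (t - s)) \<in> borel_measurable lborel"
      using assms(3) by measurable
    then show "(\<lambda>(s, \<tau>). (\<phi> (t - s), \<tau>)) \<in> measurable (lborel \<Otimes>\<^sub>M M) (lborel \<Otimes>\<^sub>M M)"
      by (auto intro!: measurable_Pair simp: split_beta' measurable_lborel2)
  qed
  from measurable_comp[OF this assms(2)]
  have "(\<lambda>(s, \<tau>). g (\<phi> (t - s)) \<tau>) \<in> borel_measurable (lborel \<Otimes>\<^sub>M M)"
    by (simp add: comp_def split_beta')
  from borel_measurable_times[OF assms(1) this] show ?thesis
    by (simp add: split_beta')
qed

lemma zero_on_ball_if_AE_integrand_zero:
  fixes K g :: "real \<Rightarrow> 'x \<Rightarrow> real" and \<phi> :: "real \<Rightarrow> real"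
  assumes "AE s in lborel. ennreal (K s \<tau> * g (\<phi> (t - s)) \<tau>) = 0"
    and "\<And>s. \<bar>s\<bar> < r \<Longrightarrow> K s \<tau> > 0"
    and "\<And>u. u \<ge> 0 \<Longrightarrow> g u \<tau> \<ge> 0" "\<And>u. u \<ge> 0 \<Longrightarrow> g u \<tau> = 0 \<longleftrightarrow> u = 0"
    and "continuous_on UNIV \<phi>" "\<And>t. \<phi> t \<ge> 0"
  shows "\<forall>y\<in>ball t r. \<phi> y = 0"
proof -
  have pointwise: "\<phi> (t - s) = 0" if "\<bar>s\<bar> < r" "ennreal (K s \<tau> * g (\<phi> (t - s)) \<tau>) = 0" for s
  proof -
    have "K s \<tau> > 0" "K s \<tau> * g (\<phi> (t - s)) \<tau> \<le> 0"
      using assms(2) that by (auto simp: ennreal_eq_0_iff)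
    then have "g (\<phi> (t - s)) \<tau> = 0"
      using assms(3,6) by (meson antisym mult_le_0_iff not_less)
    then show ?thesis
      using assms(4,6) by blast
  qed
  from assms(1) have "AE s in lborel. s \<in> ball 0 r \<longrightarrow> \<phi> (t - s) = 0"
    by eventually_elim (use pointwise in auto)
  moreover have "continuous_on UNIV (\<lambda>s. \<phi> (t - s))"
    by (intro continuous_on_compose2[OF assms(5)] continuous_intros) auto
  ultimately have "\<phi> (t - s) = 0" if "s \<in> ball 0 r" for s
    using continuous_AE_eq_on_open_imp_eq[OF _ open_ball _ that] by blast
  then show ?thesis
    by (force simp: dist_real_def)
qed

theorem lemma1p2:
  fixes M :: "'x measure"
    and K :: "real \<Rightarrow> 'x \<Rightarrow> real"
    and g :: "real \<Rightarrow> 'x \<Rightarrow> real"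
    and Xt :: "'x set"
    and A :: "'x \<Rightarrow> real"
    and \<phi> :: "real \<Rightarrow> real"
  assumes fin: "finite_measure M"
    and K_nonneg: "\<And>s \<tau>. \<tau> \<in> space M \<Longrightarrow> K s \<tau> \<ge> 0"
    and K_int: "integrable (lborel \<Otimes>\<^sub>M M) (\<lambda>(s, \<tau>). K s \<tau>)"
    and K_pos: "\<And>\<tau>. \<tau> \<in> space M \<Longrightarrow> (\<integral>\<^sup>+ s. ennreal (K s \<tau>) \<partial>lborel) > 0"
    and g_meas: "(\<lambda>(u, \<tau>). g u \<tau>) \<in> borel_measurable (restrict_space (lborel \<Otimes>\<^sub>M M) ({0..} \<times> space M))"
    and g_nonneg: "\<And>u \<tau>. u \<ge> 0 \<Longrightarrow> \<tau> \<in> space M \<Longrightarrow> g u \<tau> \<ge> 0"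
    and g_zero: "\<And>\<tau>. \<tau> \<in> space M \<Longrightarrow> g 0 \<tau> = 0"
    and g_cont: "\<And>\<tau>. \<tau> \<in> space M \<Longrightarrow> continuous_on {0..} (\<lambda>u. g u \<tau>)"
    and g_deriv: "\<And>\<tau>. \<tau> \<in> space M \<Longrightarrow>
        \<exists>d > 0. ((\<lambda>u. g u \<tau>) has_real_derivative d) (at 0 within {0..})"
    and Xt_sets: "Xt \<in> sets M"
    and Xt_pos: "measure M Xt > 0"
    and A_meas: "A \<in> borel_measurable (restrict_space M Xt)"
    and A_pos: "\<And>\<tau>. \<tau> \<in> Xt \<Longrightarrow> A \<tau> > 0"
    and hyp_i: "\<And>\<tau> u. \<tau> \<in> Xt \<Longrightarrow> u \<ge> 0 \<Longrightarrow> (g u \<tau> = 0 \<longleftrightarrow> u = 0)"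
    and hyp_ii: "\<And>\<tau> s. \<tau> \<in> Xt \<Longrightarrow> - A \<tau> < s \<Longrightarrow> s < A \<tau> \<Longrightarrow> K s \<tau> > 0"
    and phi_cont: "continuous_on UNIV \<phi>"
    and phi_nonneg: "\<And>t. \<phi> t \<ge> 0"
    and phi_sol: "\<And>t. ennreal (\<phi> t) =
        (\<integral>\<^sup>+ \<tau>. (\<integral>\<^sup>+ s. ennreal (K s \<tau> * g (\<phi> (t - s)) \<tau>) \<partial>lborel) \<partial>M)"
    and phi0: "\<phi> 0 = 0"
  shows "\<forall>t. \<phi> t = 0"
proof -
  have integrand_meas: "(\<lambda>(s, \<tau>). ennreal (K s \<tau> * g (\<phi> (t - s)) \<tau>)) \<in> borel_measurable (lborel \<Otimes>\<^sub>M M)"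
    for t
    using measurable_compose[OF borel_measurable_kernel_integrand measurable_ennreal,
        OF borel_measurable_integrable[OF K_int] g_meas
        borel_measurable_continuous_onI[OF phi_cont] phi_nonneg]
    by (simp add: split_beta')
  have Xt_nonnull: "emeasure M Xt \<noteq> 0"
    using Xt_pos by (auto simp: measure_def)
  have "open {t. \<phi> t = 0}"
    unfolding open_contains_ball
  proof safe
    fix t assume "\<phi> t = 0"
    then obtain \<tau> where \<tau>: "\<tau> \<in> Xt" "AE s in lborel. ennreal (K s \<tau> * g (\<phi> (t - s)) \<tau>) = 0"
      using phi_sol[of t] by (auto intro: nn_integral_iterated_zero_obtains[OF
            lborel.sigma_finite_measure_axioms integrand_meas _ Xt_sets Xt_nonnull])
    have "\<tau> \<in> space M"
      using \<tau>(1) Xt_sets sets.sets_into_space by blast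
    moreover have "K s \<tau> > 0" if "\<bar>s\<bar> < A \<tau>" for s
      using hyp_ii[OF \<tau>(1)] that by (simp add: abs_less_iff)
    ultimately have "\<forall>y\<in>ball t (A \<tau>). \<phi> y = 0"
      using zero_on_ball_if_AE_integrand_zero[where K = K and g = g and \<phi> = \<phi> and \<tau> = \<tau> and t = t,
          OF \<tau>(2) _ _ hyp_i[OF \<tau>(1)] phi_cont phi_nonneg] g_nonneg
      by blast
    with A_pos[OF \<tau>(1)] show "\<exists>e>0. ball t e \<subseteq> {t. \<phi> t = 0}"
      by blast
  qed
  then show ?thesis
    using continuous_levelset_open[OF connected_UNIV phi_cont, of 0] phi0 by auto
qed

end
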